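(* Let $h>0$ and let $B\subset\mathbb Z^8_h$ be bounded. Then for every function $f:\overline B\to\mathbb O$ and every $y\in\mathbb Z^8_h$, $$\chi_B(y)f(y)=\int_{\partial B}K^h(x,y)*f(x)\,dS(x)+\int_BE^h(y-x)\,(D^hf)(x)\,dV^h(x).$$
   Context: $\mathbb O$ is the real octonion algebra with basis $\mathbf e_0=1,\mathbf e_1,\dots,\mathbf e_7$, where $\mathbf e_i\mathbf e_j=-\delta_{ij}+\sum_k\varepsilon_{ijk}\mathbf e_k$ for $1\le i,j\le 7$, $\varepsilon_{ijk}$ totally antisymmetric with $\varepsilon_{ijk}=1$ for $ijk\in\{123,145,176,246,257,347,365\}$; $\overline{\mathbf e}_0=\mathbf e_0$, $\overline{\mathbf e}_l=-\mathbf e_l$ ($l\ge1$). For $h>0$, $\mathbb Z^8_h=(h\mathbb Z)^8$, $e_0,\dots,e_7$ are the standard unit vectors of $\mathbb R^8$, $\chi_A$ is the indicator of $A$. Difference operators: $\partial_l^{+,h}f(x)=(f(x+he_l)-f(x))/h$, $\partial_l^{-,h}f(x)=(f(x)-f(x-he_l))/h$, $\partial_l^h=\frac12(\partial_l^{+,h}+\partial_l^{-,h})$, $D^hf=\sum_{l=0}^7\mathbf e_l\partial_l^hf$. $N(x)=\{x,x\pm he_0,\dots,x\pm he_7\}$; $\partial B=\{x:\ N(x)\cap B\neq\emptyset,\ N(x)\cap(\mathbb Z^8_h\setminus B)\neq\emptyset\}$, $\overline B=B\cup\partial B$. $\int_Ag\,dV^h=\sum_{x\in A}g(x)h^8$.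 For $x\in\partial B$: $\Sigma(x)=\sum_l[(\partial_l^{+,h}\chi_B(x))^2+(\partial_l^{-,h}\chi_B(x))^2]$, $s(x)=\frac{h^8}{2}\sqrt{\Sigma(x)}$, $n_l^\pm(x)=-2\partial_l^{\pm,h}\chi_B(x)/\sqrt{\Sigma(x)}$, and $\int_{\partial B}g\,dS=\sum_{x\in\partial B}g(x)s(x)$. Fundamental solution: $E^1(x)=\frac{1}{(2\pi)^8}\int_{[-\pi,\pi]^8}\frac{\sum_l\overline{\mathbf e}_l\sin u_l}{\sum_l\sin^2u_l}\sin(\sum_lu_lx_l)\,du$ for $x\in\mathbb Z^8$, and $E^h(x)=h^{-7}E^1(x/h)$ for $x\in\mathbb Z^8_h$. Star product with the boundary kernel: for $x\in\partial B$, $y\in\mathbb Z^8_h$ and $g:\partial B\to\mathbb O$, $$K^h(x,y)*g(x)=-\frac12\sum_{l=0}^7\Big(E^h(he_l-x+y)\,n_l^-(x)+E^h(-he_l-x+y)\,n_l^+(x)\Big)\big(\mathbf e_l\,g(x)\big).$$ *)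

theory Defs
  imports "HOL-Analysis.Analysis"
begin

text \<open>Octonions are represented by their coordinate vectors in real^8 w.r.t. the basis
  e_0 = 1, e_1, ..., e_7 (index type 8, elements 0..7). Points of R^8 are also real^8.\<close>

type_synonym oct = "real ^ 8"

definition eb :: "8 \<Rightarrow> real ^ 8" where
  "eb l = axis l 1"

definition oct_triples :: "(8 \<times> 8 \<times> 8) list" where
  "oct_triples = [(1,2,3),(1,4,5),(1,7,6),(2,4,6),(2,5,7),(3,4,7),(3,6,5)]"

definition oeps :: "8 \<Rightarrow> 8 \<Rightarrow> 8 \<Rightarrow> real" where
  "oeps i j k =
     (if (i,j,k) \<in> set oct_triples \<or> (j,k,i) \<in> set oct_triples \<or> (k,i,j) \<in> set oct_triples then 1
      else if (j,i,k) \<in> set oct_triples \<or> (i,k,j) \<in> set oct_triples \<or> (k,j,i) \<in> set oct_triples then -1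
      else 0)"

definition ebmul :: "8 \<Rightarrow> 8 \<Rightarrow> oct" where
  "ebmul i j =
     (if i = 0 then eb j
      else if j = 0 then eb i
      else (if i = j then - eb 0 else 0) + (\<Sum>k\<in>UNIV. oeps i j k *\<^sub>R eb k))"

definition omul :: "oct \<Rightarrow> oct \<Rightarrow> oct" where
  "omul a b = (\<Sum>i\<in>UNIV. \<Sum>j\<in>UNIV. (a $ i * b $ j) *\<^sub>R ebmul i j)"

definition ocnj :: "oct \<Rightarrow> oct" where
  "ocnj a = (\<chi> l. if l = 0 then a $ l else - (a $ l))"

definition lattice :: "real \<Rightarrow> (real ^ 8) set" where
  "lattice h = {x. \<forall>i. \<exists>k::int. x $ i = h * of_int k}"

definition dplus :: "real \<Rightarrow> 8 \<Rightarrow> (real ^ 8 \<Rightarrow> 'b::real_vector) \<Rightarrow> real ^ 8 \<Rightarrow> 'b" where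
  "dplus h l f x = (1 / h) *\<^sub>R (f (x + h *\<^sub>R eb l) - f x)"

definition dminus :: "real \<Rightarrow> 8 \<Rightarrow> (real ^ 8 \<Rightarrow> 'b::real_vector) \<Rightarrow> real ^ 8 \<Rightarrow> 'b" where
  "dminus h l f x = (1 / h) *\<^sub>R (f x - f (x - h *\<^sub>R eb l))"

definition dcent :: "real \<Rightarrow> 8 \<Rightarrow> (real ^ 8 \<Rightarrow> 'b::real_vector) \<Rightarrow> real ^ 8 \<Rightarrow> 'b" where
  "dcent h l f x = (1 / 2) *\<^sub>R (dplus h l f x + dminus h l f x)"

definition Dh :: "real \<Rightarrow> (real ^ 8 \<Rightarrow> oct) \<Rightarrow> real ^ 8 \<Rightarrow> oct" where
  "Dh h f x = (\<Sum>l\<in>UNIV. omul (eb l) (dcent h l f x))"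

definition nbhd :: "real \<Rightarrow> real ^ 8 \<Rightarrow> (real ^ 8) set" where
  "nbhd h x = insert x ((\<lambda>l. x + h *\<^sub>R eb l) ` UNIV \<union> (\<lambda>l. x - h *\<^sub>R eb l) ` UNIV)"

definition bdry :: "real \<Rightarrow> (real ^ 8) set \<Rightarrow> (real ^ 8) set" where
  "bdry h B = {x \<in> lattice h. nbhd h x \<inter> B \<noteq> {} \<and> nbhd h x \<inter> (lattice h - B) \<noteq> {}}"

definition Sig :: "real \<Rightarrow> (real ^ 8) set \<Rightarrow> real ^ 8 \<Rightarrow> real" where
  "Sig h B x = (\<Sum>l\<in>UNIV. (dplus h l (indicator B) x)\<^sup>2 + (dminus h l (indicator B) x)\<^sup>2)"

definition sdens :: "real \<Rightarrow> (real ^ 8) set \<Rightarrow> real ^ 8 \<Rightarrow> real" where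
  "sdens h B x = h ^ 8 / 2 * sqrt (Sig h B x)"

definition nplus :: "real \<Rightarrow> (real ^ 8) set \<Rightarrow> 8 \<Rightarrow> real ^ 8 \<Rightarrow> real" where
  "nplus h B l x = - 2 * dplus h l (indicator B) x / sqrt (Sig h B x)"

definition nminus :: "real \<Rightarrow> (real ^ 8) set \<Rightarrow> 8 \<Rightarrow> real ^ 8 \<Rightarrow> real" where
  "nminus h B l x = - 2 * dminus h l (indicator B) x / sqrt (Sig h B x)"

text \<open>Fundamental solution E^1 on Z^8 (Henstock-Kurzweil integral over [-pi,pi]^8) and E^h.\<close>
definition E1 :: "real ^ 8 \<Rightarrow> oct" where
  "E1 x = (1 / (2 * pi) ^ 8) *\<^sub>R
     integral (cbox (\<chi> i. - pi) (\<chi> i. pi))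
       (\<lambda>u. (sin (\<Sum>l\<in>UNIV. u $ l * x $ l) / (\<Sum>l\<in>UNIV. (sin (u $ l))\<^sup>2)) *\<^sub>R
              (\<Sum>l\<in>UNIV. sin (u $ l) *\<^sub>R ocnj (eb l)))"

definition Eh :: "real \<Rightarrow> real ^ 8 \<Rightarrow> oct" where
  "Eh h x = (1 / h ^ 7) *\<^sub>R E1 ((1 / h) *\<^sub>R x)"

definition Kstar :: "real \<Rightarrow> (real ^ 8) set \<Rightarrow> real ^ 8 \<Rightarrow> real ^ 8 \<Rightarrow> (real ^ 8 \<Rightarrow> oct) \<Rightarrow> oct" where
  "Kstar h B x y g = - (1 / 2) *\<^sub>R
     (\<Sum>l\<in>UNIV. omul (nminus h B l x *\<^sub>R Eh h (h *\<^sub>R eb l - x + y)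
                      + nplus h B l x *\<^sub>R Eh h (- (h *\<^sub>R eb l) - x + y))
                     (omul (eb l) (g x)))"

definition surf_int :: "real \<Rightarrow> (real ^ 8) set \<Rightarrow> (real ^ 8 \<Rightarrow> oct) \<Rightarrow> oct" where
  "surf_int h B g = (\<Sum>x\<in>bdry h B. sdens h B x *\<^sub>R g x)"

definition vol_int :: "real \<Rightarrow> (real ^ 8) set \<Rightarrow> (real ^ 8 \<Rightarrow> oct) \<Rightarrow> oct" where
  "vol_int h A g = (\<Sum>x\<in>A. h ^ 8 *\<^sub>R g x)"

end

theory Submission
  imports Defs
begin

text \<open>E^1 is a fundamental solution of the central difference operator acting from the right:
  for integer k, sum_l (E^1(k + e_l) - E^1(k - e_l)) (e_l g) = 2 delta_{k0} g. Indeed, in the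
  Fourier integral the differences produce 2 cos(u.k) sin(u_l); contracting with the e_l gives
  conj(s) (s g) for s = (sin u_l)_l, which by left alternativity is |s|^2 g and cancels the
  denominator, leaving the integral of cos(u.k) over [-pi,pi]^8. Rescaling gives the same for
  E^h with 2 h^-7 delta. The representation formula then follows by summation by parts over the
  finite set B, the surface density cancelling the normalisation of the discrete normals.\<close>

section \<open>Octonion multiplication\<close>

lemma exhaust_8:
  fixes x :: 8
  shows "x = 0 \<or> x = 1 \<or> x = 2 \<or> x = 3 \<or> x = 4 \<or> x = 5 \<or> x = 6 \<or> x = 7"
proof (induct x)
  case (of_int z)
  then have "z = 0 \<or> z = 1 \<or> z = 2 \<or> z = 3 \<or> z = 4 \<or> z = 5 \<or> z = 6 \<or> z = 7" by fastforce
  then show ?case by auto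
qed

lemma forall_8: "(\<forall>i::8. P i) \<longleftrightarrow> P 0 \<and> P 1 \<and> P 2 \<and> P 3 \<and> P 4 \<and> P 5 \<and> P 6 \<and> P 7"
  by (metis exhaust_8)

lemma sum_8: "sum f (UNIV::8 set) = f 0 + f 1 + f 2 + f 3 + f 4 + f 5 + f 6 + f 7"
proof -
  have U: "(UNIV::8 set) = {0,1,2,3,4,5,6,7}" using exhaust_8 by auto
  show ?thesis unfolding U by (simp add: ac_simps)
qed

lemma eb_nth: "eb l $ k = (if k = l then 1 else 0)"
  by (simp add: eb_def axis_def)

lemma eb_expansion: "(\<Sum>l\<in>UNIV. v $ l *\<^sub>R eb l) = v"
  by (simp add: vec_eq_iff sum_component eb_nth if_distrib cong: if_cong)

lemma inner_eb [simp]: "u \<bullet> eb l = u $ l"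
  by (simp add: eb_def inner_axis)

lemma omul_nth:
  "omul a b $ 0 = a$0 * b$0 - a$1 * b$1 - a$2 * b$2 - a$3 * b$3 - a$4 * b$4 - a$5 * b$5 - a$6 * b$6 - a$7 * b$7"
  "omul a b $ 1 = a$0 * b$1 + a$1 * b$0 + a$2 * b$3 - a$3 * b$2 + a$4 * b$5 - a$5 * b$4 - a$6 * b$7 + a$7 * b$6"
  "omul a b $ 2 = a$0 * b$2 - a$1 * b$3 + a$2 * b$0 + a$3 * b$1 + a$4 * b$6 + a$5 * b$7 - a$6 * b$4 - a$7 * b$5"
  "omul a b $ 3 = a$0 * b$3 + a$1 * b$2 - a$2 * b$1 + a$3 * b$0 + a$4 * b$7 - a$5 * b$6 + a$6 * b$5 - a$7 * b$4"
  "omul a b $ 4 = a$0 * b$4 - a$1 * b$5 - a$2 * b$6 - a$3 * b$7 + a$4 * b$0 + a$5 * b$1 + a$6 * b$2 + a$7 * b$3"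
  "omul a b $ 5 = a$0 * b$5 + a$1 * b$4 - a$2 * b$7 + a$3 * b$6 - a$4 * b$1 + a$5 * b$0 - a$6 * b$3 + a$7 * b$2"
  "omul a b $ 6 = a$0 * b$6 + a$1 * b$7 + a$2 * b$4 - a$3 * b$5 - a$4 * b$2 + a$5 * b$3 + a$6 * b$0 - a$7 * b$1"
  "omul a b $ 7 = a$0 * b$7 - a$1 * b$6 + a$2 * b$5 + a$3 * b$4 - a$4 * b$3 - a$5 * b$2 + a$6 * b$1 + a$7 * b$0"
  by (simp_all add: omul_def sum_component sum_8 ebmul_def eb_nth oeps_def oct_triples_def)

interpretation omul: bounded_bilinear omul
proof -
  have "bilinear omul"
    unfolding bilinear_def
    by (intro conjI allI linearI; simp add: omul_def scaleR_add_left scaleR_add_right sum.distrib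
          distrib_left distrib_right scaleR_sum_right mult.assoc mult.left_commute)
  then show "bounded_bilinear omul"
    by (simp add: bilinear_conv_bounded_bilinear)
qed

lemma linear_ocnj: "linear ocnj"
  by (rule linearI) (auto simp: vec_eq_iff ocnj_def)

lemma norm_ocnj [simp]: "norm (ocnj a) = norm a"
  unfolding norm_vec_def ocnj_def by (auto intro!: L2_set_cong)

text \<open>Left alternativity: conj(s) (s g) = (conj(s) s) g.\<close>
lemma omul_ocnj_omul: "omul (ocnj s) (omul s g) = (norm s)\<^sup>2 *\<^sub>R g"
  unfolding vec_eq_iff forall_8 power2_norm_eq_inner inner_vec_def
  by (simp add: omul_nth ocnj_def sum_8; algebra)+

section \<open>Trigonometric integrals over the cube\<close>

lemma integral_prod_Basis_lborel:
  fixes f :: "'a::euclidean_space \<Rightarrow> real \<Rightarrow> complex"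
  assumes int: "\<And>b. b \<in> Basis \<Longrightarrow> integrable lborel (f b)"
  shows "(\<integral>x. (\<Prod>b\<in>Basis. f b (x \<bullet> b)) \<partial>(lborel::'a measure)) = (\<Prod>b\<in>Basis. integral\<^sup>L lborel (f b))"
proof -
  interpret product_sigma_finite "\<lambda>_. lborel" by standard
  have meas: "(\<lambda>x. (\<Prod>b\<in>Basis. f b (x \<bullet> b))) \<in> borel_measurable (borel::'a measure)"
    using int by (intro borel_measurable_prod) (auto intro!: measurable_compose[OF _ borel_measurable_integrable])
  have "(\<integral>x. (\<Prod>b\<in>Basis. f b (x \<bullet> b)) \<partial>(lborel::'a measure)) =
     (\<integral>x. (\<Prod>b\<in>Basis. f b ((\<Sum>b'\<in>Basis. x b' *\<^sub>R b') \<bullet> b)) \<partial>(\<Pi>\<^sub>M b\<in>Basis. lborel))"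
    by (subst lborel_eq, rule integral_distr[OF _ meas]) measurable
  also have "\<dots> = (\<integral>x. (\<Prod>b\<in>Basis. f b (x b)) \<partial>(\<Pi>\<^sub>M b\<in>Basis. lborel))"
    by (rule Bochner_Integration.integral_cong)
      (auto intro!: prod.cong simp: inner_sum_left inner_Basis if_distrib sum.delta cong: if_cong)
  also have "\<dots> = (\<Prod>b\<in>Basis. integral\<^sup>L lborel (f b))"
    by (rule product_integral_prod) (auto intro: int)
  finally show ?thesis .
qed

lemma integral_exp_int_mult_period:
  fixes n :: int
  shows "integral\<^sup>L lborel (\<lambda>t. indicator {-pi..pi} t *\<^sub>R exp (\<i> * of_real (of_int n * t)))
           = (if n = 0 then 2 * pi else 0)"
proof (cases "n = 0")
  case True
  have "integral\<^sup>L lborel (\<lambda>t. indicator {-pi..pi} t *\<^sub>R (1::complex)) = of_real pi - of_real (-pi)"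
    by (rule integral_FTC_atLeastAtMost[where F="\<lambda>t. of_real t"]) (auto intro!: derivative_eq_intros)
  then show ?thesis using True by simp
next
  case False
  let ?a = "\<i> * of_int n :: complex"
  have a: "?a \<noteq> 0" using False by simp
  have "integral\<^sup>L lborel (\<lambda>t. indicator {-pi..pi} t *\<^sub>R exp (?a * of_real t)) =
     exp (?a * of_real pi) / ?a - exp (?a * of_real (-pi)) / ?a"
    using a
    by (intro integral_FTC_atLeastAtMost[where F="\<lambda>t. exp (?a * of_real t) / ?a"])
      (auto intro!: derivative_eq_intros continuous_intros
        has_complex_derivative_imp_has_vector_derivative[unfolded o_def])
  also have "exp (?a * of_real pi) = exp (?a * of_real (-pi) + \<i> * (of_int n * (of_real pi * 2)))"
    by (simp add: algebra_simps)
  also have "\<dots> = exp (?a * of_real (-pi))"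
    by (rule exp_plus_2pin)
  finally show ?thesis using False by (simp add: mult.assoc)
qed

lemma integral_cos_inner_Ints:
  fixes k :: "real^'n"
  assumes k: "\<forall>i. k $ i \<in> \<int>"
  shows "integral (cbox (\<chi> i. -pi) (\<chi> i. pi)) (\<lambda>u. cos (u \<bullet> k))
           = (if k = 0 then (2 * pi) ^ CARD('n) else 0)"
proof -
  define C where "C = cbox (\<chi> i::'n. -pi) (\<chi> i. pi)"
  define f where "f b t = indicator {-pi..pi} t *\<^sub>R exp (\<i> * of_real ((k \<bullet> b) * t))"
    for b :: "real^'n" and t :: real
  have f_int: "integral\<^sup>L lborel (f b) = (if k \<bullet> b = 0 then 2 * pi else 0)" if "b \<in> Basis" for b
  proof -
    obtain i where b: "b = axis i 1" using \<open>b \<in> Basis\<close> by (auto simp: Basis_vec_def)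
    obtain z :: int where "k $ i = of_int z" using k Ints_cases by metis
    then have "k \<bullet> b = of_int z" using b by (simp add: inner_axis)
    then show ?thesis unfolding f_def using integral_exp_int_mult_period[of z] by simp
  qed
  have f_integrable: "integrable lborel (f b)" for b
    unfolding f_def by (rule borel_integrable_compact) (auto intro!: continuous_intros)
  have indicator_C: "(\<Prod>b\<in>Basis. indicator {-pi..pi} (u \<bullet> b) :: complex) = indicator C u" for u
  proof (cases "u \<in> C")
    case True
    then have "\<forall>b\<in>Basis. u \<bullet> b \<in> {-pi..pi}"
      by (auto simp: C_def mem_box_cart Basis_vec_def inner_axis)
    then show ?thesis using True by (auto intro!: prod.neutral)
  next
    case False
    then obtain i where "u $ i \<notin> {-pi..pi}"
      unfolding C_def mem_box_cart by auto
    then have "axis i 1 \<in> (Basis :: (real^'n) set)" "u \<bullet> axis i 1 \<notin> {-pi..pi}"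
      by (auto simp: inner_axis Basis_vec_def)
    then show ?thesis using False by (simp, intro prod_zero bexI[of _ "axis i 1"]) auto
  qed
  have prod_f: "(\<Prod>b\<in>Basis. f b (u \<bullet> b)) = indicator C u *\<^sub>R exp (\<i> * of_real (u \<bullet> k))" for u
  proof -
    have "(\<Prod>b\<in>Basis. f b (u \<bullet> b)) = (\<Prod>b\<in>Basis. indicator {-pi..pi} (u \<bullet> b) :: complex)
            * (\<Prod>b\<in>Basis. exp (\<i> * of_real ((k \<bullet> b) * (u \<bullet> b))))"
      unfolding f_def scaleR_conv_of_real
      by (subst prod.distrib[symmetric]) (auto intro!: prod.cong simp: indicator_def)
    also have "(\<Prod>b\<in>Basis. exp (\<i> * of_real ((k \<bullet> b) * (u \<bullet> b)))) = exp (\<i> * of_real (u \<bullet> k))"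
      by (simp add: exp_sum[symmetric] sum_distrib_left[symmetric] euclidean_inner[of u k] mult.commute)
    finally show ?thesis using indicator_C by (simp add: scaleR_conv_of_real indicator_def)
  qed
  have integrable_exp: "integrable lborel (\<lambda>u. indicator C u *\<^sub>R exp (\<i> * of_real (u \<bullet> k)))"
    unfolding C_def by (rule borel_integrable_compact) (auto intro!: continuous_intros)
  have "set_integrable lborel C (\<lambda>u. cos (u \<bullet> k))"
    unfolding set_integrable_def C_def by (rule borel_integrable_compact) (auto intro!: continuous_intros)
  then have "integral C (\<lambda>u. cos (u \<bullet> k)) = (LINT u:C|lborel. cos (u \<bullet> k))"
    by (simp add: set_borel_integral_eq_integral)
  also have "\<dots> = integral\<^sup>L lborel (\<lambda>u. Re (indicator C u *\<^sub>R exp (\<i> * of_real (u \<bullet> k))))"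
    unfolding set_lebesgue_integral_def
    by (rule Bochner_Integration.integral_cong) (auto simp: Re_exp indicator_def)
  also have "\<dots> = Re (\<Prod>b\<in>Basis. integral\<^sup>L lborel (f b))"
    using integral_bounded_linear[OF bounded_linear_Re integrable_exp]
      integral_prod_Basis_lborel[of f, OF f_integrable] prod_f
    by simp
  also have "\<dots> = (if k = 0 then (2 * pi) ^ CARD('n) else 0)"
  proof (cases "k = 0")
    case True
    then show ?thesis by (simp add: prod.cong[OF refl f_int])
  next
    case False
    then obtain b where b: "b \<in> Basis" "k \<bullet> b \<noteq> 0" using euclidean_all_zero_iff by blast
    then have vanish: "(\<Prod>b\<in>Basis. integral\<^sup>L lborel (f b)) = 0"
      using f_int[OF b(1)] by (intro prod_zero bexI[OF _ b(1)]) simp_all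
    show ?thesis using False by (subst vanish) simp
  qed
  finally show ?thesis unfolding C_def .
qed

section \<open>The lattice\<close>

lemma lattice_add: "x \<in> lattice h \<Longrightarrow> z \<in> lattice h \<Longrightarrow> x + z \<in> lattice h"
  unfolding lattice_def
proof clarsimp
  fix i assume "\<forall>i. \<exists>k::int. x $ i = h * of_int k" "\<forall>i. \<exists>k::int. z $ i = h * of_int k"
  then obtain a b :: int where "x $ i = h * of_int a" "z $ i = h * of_int b" by blast
  then show "\<exists>k::int. x $ i + z $ i = h * of_int k" by (intro exI[of _ "a + b"]) (simp add: algebra_simps)
qed

lemma lattice_uminus: "x \<in> lattice h \<Longrightarrow> - x \<in> lattice h"
  unfolding lattice_def
proof clarsimp
  fix i assume "\<forall>i. \<exists>k::int. x $ i = h * of_int k"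
  then obtain a :: int where "x $ i = h * of_int a" by blast
  then show "\<exists>k::int. - x $ i = h * of_int k" by (intro exI[of _ "- a"]) simp
qed

lemma lattice_diff: "x \<in> lattice h \<Longrightarrow> z \<in> lattice h \<Longrightarrow> x - z \<in> lattice h"
  using lattice_add[of x h "- z"] lattice_uminus[of z h] by simp

lemma scaleR_eb_in_lattice: "h *\<^sub>R eb l \<in> lattice h"
  unfolding lattice_def by (auto simp: eb_nth intro: exI[of _ 1] exI[of _ 0])

lemma lattice_scaled_Ints:
  assumes "h \<noteq> 0" and "z \<in> lattice h"
  shows "\<forall>i. ((1 / h) *\<^sub>R z) $ i \<in> \<int>"
proof
  fix i
  obtain k :: int where "z $ i = h * of_int k" using assms(2) unfolding lattice_def by blast
  then show "((1 / h) *\<^sub>R z) $ i \<in> \<int>" using assms(1) by simp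
qed

lemma finite_bounded_lattice_subset:
  assumes h: "h > 0" and B: "B \<subseteq> lattice h" and "bounded B"
  shows "finite B"
proof -
  obtain R where R: "\<forall>x\<in>B. norm x \<le> R" using \<open>bounded B\<close> unfolding bounded_iff by blast
  define N where "N = \<lceil>R / h\<rceil>"
  let ?K = "\<Pi>\<^sub>E i\<in>(UNIV::8 set). {-N..N}"
  have "B \<subseteq> (\<lambda>k. \<chi> i. h * of_int (k i)) ` ?K"
  proof
    fix b assume b: "b \<in> B"
    define k where "k i = (SOME k::int. b $ i = h * of_int k)" for i
    have k: "b $ i = h * of_int (k i)" for i
    proof -
      have "\<exists>k::int. b $ i = h * of_int k" using B b unfolding lattice_def by blast
      then show ?thesis unfolding k_def by (rule someI_ex)
    qed
    have "\<bar>k i\<bar> \<le> N" for i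
    proof -
      have "\<bar>b $ i\<bar> \<le> R" using R b component_le_norm_cart[of b i] by force
      then have "h * \<bar>of_int (k i)\<bar> \<le> R" using k[of i] h by (simp add: abs_mult)
      then have "real_of_int \<bar>k i\<bar> \<le> R / h" using h by (simp add: field_simps)
      then show ?thesis unfolding N_def by (metis ceiling_mono ceiling_of_int)
    qed
    then have "k \<in> ?K" by (force simp: abs_le_iff)
    moreover have "b = (\<chi> i. h * of_int (k i))" using k by (simp add: vec_eq_iff)
    ultimately show "b \<in> (\<lambda>k. \<chi> i. h * of_int (k i)) ` ?K" by blast
  qed
  moreover have "finite ((\<lambda>k. \<chi> i. h * of_int (k i)) ` ?K)"
    by (intro finite_imageI finite_PiE) auto
  ultimately show ?thesis by (rule finite_subset)
qed

lemma nbhd_sym: "x \<in> nbhd h z \<longleftrightarrow> z \<in> nbhd h x"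
proof -
  have "x = z + v \<longleftrightarrow> z = x - v" "x = z - v \<longleftrightarrow> z = x + v" for v :: "real^8"
    by auto
  then show ?thesis unfolding nbhd_def by blast
qed

lemma finite_nbhd: "finite (nbhd h x)"
  by (simp add: nbhd_def)

lemma nbhd_subset_lattice: "x \<in> lattice h \<Longrightarrow> nbhd h x \<subseteq> lattice h"
  unfolding nbhd_def using lattice_add lattice_diff scaleR_eb_in_lattice by blast

section \<open>The fundamental solution\<close>

definition sin_vec :: "real^'n \<Rightarrow> real^'n" where
  "sin_vec u = (\<chi> l. sin (u $ l))"

definition E1_integrand :: "real^8 \<Rightarrow> real^8 \<Rightarrow> oct" where
  "E1_integrand x u = (sin (u \<bullet> x) / (norm (sin_vec u))\<^sup>2) *\<^sub>R ocnj (sin_vec u)"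

lemma E1_eq_integral:
  "E1 x = (1 / (2 * pi) ^ 8) *\<^sub>R integral (cbox (\<chi> i. - pi) (\<chi> i. pi)) (E1_integrand x)"
proof -
  have sum_ocnj: "(\<Sum>l\<in>UNIV. sin (u $ l) *\<^sub>R ocnj (eb l)) = ocnj (sin_vec u)" for u
  proof -
    have "(\<Sum>l\<in>UNIV. sin (u $ l) *\<^sub>R ocnj (eb l)) = ocnj (\<Sum>l\<in>UNIV. sin_vec u $ l *\<^sub>R eb l)"
      by (simp add: sin_vec_def linear_sum[OF linear_ocnj] linear_scale[OF linear_ocnj] o_def)
    then show ?thesis by (simp only: eb_expansion)
  qed
  have sum_sq: "(\<Sum>l\<in>UNIV. (sin (u $ l))\<^sup>2) = (norm (sin_vec u))\<^sup>2" for u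
    unfolding power2_norm_eq_inner by (simp add: inner_vec_def sin_vec_def power2_eq_square)
  show ?thesis
    unfolding E1_def E1_integrand_def inner_vec_def inner_real_def sum_ocnj sum_sq ..
qed

lemma abs_sin_sum_le:
  fixes f :: "'a \<Rightarrow> real"
  assumes "finite I"
  shows "\<bar>sin (\<Sum>i\<in>I. f i)\<bar> \<le> (\<Sum>i\<in>I. \<bar>sin (f i)\<bar>)"
  using assms
proof (induction I rule: finite_induct)
  case (insert a I)
  have "\<bar>sin (f a + sum f I)\<bar> \<le> \<bar>sin (f a)\<bar> * \<bar>cos (sum f I)\<bar> + \<bar>cos (f a)\<bar> * \<bar>sin (sum f I)\<bar>"
    by (simp add: sin_add abs_mult[symmetric] abs_triangle_ineq)
  also have "\<dots> \<le> \<bar>sin (f a)\<bar> + \<bar>sin (sum f I)\<bar>"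
    by (intro add_mono mult_right_le_one_le mult_left_le_one_le) auto
  finally show ?case using insert by simp
qed simp

lemma abs_sin_Ints_mult_le:
  fixes n t :: real
  assumes "n \<in> \<int>"
  shows "\<bar>sin (n * t)\<bar> \<le> \<bar>n\<bar> * \<bar>sin t\<bar>"
proof -
  have nat_case: "\<bar>sin (real m * t)\<bar> \<le> real m * \<bar>sin t\<bar>" for m
    using abs_sin_sum_le[of "{..<m}" "\<lambda>_. t"] by simp
  obtain z :: int where "n = of_int z" using assms Ints_cases by metis
  then consider m where "n = real m" | m where "n = - real m"
    by (metis of_int_of_nat_eq of_int_minus int_cases)
  then show ?thesis
    by cases (use nat_case in auto)
qed

lemma abs_sin_inner_Ints_le:
  assumes x: "\<forall>i. x $ i \<in> \<int>"
  shows "\<bar>sin (u \<bullet> x)\<bar> \<le> norm x * norm (sin_vec u)"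
proof -
  have "\<bar>sin (u \<bullet> x)\<bar> \<le> (\<Sum>l\<in>UNIV. \<bar>sin (x $ l * u $ l)\<bar>)"
    unfolding inner_vec_def by (rule order_trans[OF abs_sin_sum_le]) (simp_all add: mult.commute)
  also have "\<dots> \<le> (\<Sum>l\<in>UNIV. \<bar>x $ l\<bar> * \<bar>sin (u $ l)\<bar>)"
    using x by (intro sum_mono abs_sin_Ints_mult_le) auto
  also have "\<dots> \<le> L2_set (\<lambda>l. x $ l) UNIV * L2_set (\<lambda>l. sin (u $ l)) UNIV"
    by (rule L2_set_mult_ineq)
  also have "\<dots> = norm x * norm (sin_vec u)"
    by (simp add: norm_vec_def sin_vec_def L2_set_def)
  finally show ?thesis .
qed

lemma norm_E1_integrand_le:
  assumes "\<forall>i. x $ i \<in> \<int>"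
  shows "norm (E1_integrand x u) \<le> norm x"
proof (cases "sin_vec u = 0")
  case True
  then show ?thesis by (simp add: E1_integrand_def)
next
  case False
  let ?s = "norm (sin_vec u)"
  have "norm (E1_integrand x u) = \<bar>sin (u \<bullet> x)\<bar> * ?s / ?s\<^sup>2"
    by (simp add: E1_integrand_def)
  also have "\<dots> \<le> norm x * ?s * ?s / ?s\<^sup>2"
    using abs_sin_inner_Ints_le[OF assms] by (intro divide_right_mono mult_right_mono) auto
  also have "\<dots> = norm x"
    using False by (simp add: power2_eq_square)
  finally show ?thesis .
qed

lemma E1_integrand_integrable:
  assumes "\<forall>i. x $ i \<in> \<int>"
  shows "E1_integrand x integrable_on cbox (\<chi> i. - pi) (\<chi> i. pi)"
proof (rule measurable_bounded_by_integrable_imp_integrable)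
  show "E1_integrand x \<in> borel_measurable (lebesgue_on (cbox (\<chi> i. - pi) (\<chi> i. pi)))"
  proof (intro measurable_restrict_space1 measurable_completion)
    have [measurable]: "sin_vec \<in> borel_measurable borel"
      unfolding sin_vec_def by (intro borel_measurable_continuous_onI continuous_intros)
    have [measurable]: "ocnj \<in> borel_measurable borel"
      using linear_ocnj by (intro borel_measurable_continuous_onI linear_continuous_on)
        (simp add: linear_conv_bounded_linear)
    show "E1_integrand x \<in> borel_measurable lborel"
      unfolding E1_integrand_def by measurable
  qed
  show "(\<lambda>u. norm x) integrable_on cbox (\<chi> i. - pi) (\<chi> i. pi)"
    by (rule integrable_const)
  show "norm (E1_integrand x u) \<le> norm x" for u
    by (rule norm_E1_integrand_le[OF assms])
qed simp

lemma E1_integrand_central_difference: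
  "(\<Sum>l\<in>UNIV. omul (E1_integrand (k + eb l) u - E1_integrand (k - eb l) u) (omul (eb l) g))
     = (if sin_vec u = 0 then 0 else (2 * cos (u \<bullet> k)) *\<^sub>R g)"
proof -
  let ?c = "2 * cos (u \<bullet> k) / (norm (sin_vec u))\<^sup>2"
  have difference: "E1_integrand (k + eb l) u - E1_integrand (k - eb l) u
      = (?c * sin (u $ l)) *\<^sub>R ocnj (sin_vec u)" for l
    unfolding E1_integrand_def inner_add_right inner_diff_right inner_eb
    by (simp add: sin_add sin_diff scaleR_diff_left[symmetric] diff_divide_distrib[symmetric])
  have "(\<Sum>l\<in>UNIV. omul (E1_integrand (k + eb l) u - E1_integrand (k - eb l) u) (omul (eb l) g))
      = ?c *\<^sub>R omul (ocnj (sin_vec u)) (omul (\<Sum>l\<in>UNIV. sin (u $ l) *\<^sub>R eb l) g)"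
    unfolding difference
    by (simp add: omul.scaleR_left omul.scaleR_right omul.sum_left omul.sum_right scaleR_sum_right)
  also have "\<dots> = ?c *\<^sub>R ((norm (sin_vec u))\<^sup>2 *\<^sub>R g)"
    using eb_expansion[of "sin_vec u"] by (simp add: sin_vec_def omul_ocnj_omul)
  finally show ?thesis by simp
qed

lemma sin_vec_nonzero:
  assumes "u \<in> cbox (\<chi> i. - pi) (\<chi> i. pi)" and "u $ i \<notin> {-pi, 0, pi}"
  shows "sin_vec u \<noteq> 0"
proof -
  have "-pi \<le> u $ i" "u $ i \<le> pi" using assms(1) unfolding mem_box_cart by auto
  then have "sin (u $ i) \<noteq> 0" using assms(2) sin_eq_0_pi by force
  then show ?thesis by (auto simp: sin_vec_def vec_eq_iff)
qed

lemma negligible_coordinate_hyperplane: "negligible {x :: real^'n. x $ i = c}"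
  using negligible_standard_hyperplane[of "axis i (1::real)" c] by (simp add: cart_eq_inner_axis)

lemma E1_fundamental_solution:
  assumes k: "\<forall>i. k $ i \<in> \<int>"
  shows "(\<Sum>l\<in>UNIV. omul (E1 (k + eb l) - E1 (k - eb l)) (omul (eb l) g)) = (if k = 0 then 2 else 0) *\<^sub>R g"
proof -
  define C where "C = cbox (\<chi> i::8. - pi) (\<chi> i. pi)"
  define H where "H l u = E1_integrand (k + eb l) u - E1_integrand (k - eb l) u" for l u
  have shifted_Ints: "\<forall>i. (k + c *\<^sub>R eb l) $ i \<in> \<int>" if "c \<in> \<int>" for c l
    using k that by (auto simp: eb_nth)
  have integrable_H: "H l integrable_on C" for l
    unfolding H_def C_def
    using E1_integrand_integrable shifted_Ints[of 1 l] shifted_Ints[of "-1" l]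
    by (intro integrable_diff) auto
  have integral_H: "omul (E1 (k + eb l) - E1 (k - eb l)) (omul (eb l) g)
      = (1 / (2 * pi) ^ 8) *\<^sub>R integral C (\<lambda>u. omul (H l u) (omul (eb l) g))" for l
  proof -
    have "E1 (k + eb l) - E1 (k - eb l) = (1 / (2 * pi) ^ 8) *\<^sub>R integral C (H l)"
      unfolding E1_eq_integral C_def H_def
      using E1_integrand_integrable shifted_Ints[of 1 l] shifted_Ints[of "-1" l]
      by (simp add: integral_diff scaleR_diff_right)
    then show ?thesis
      using integral_linear[OF integrable_H omul.bounded_linear_left]
      by (simp add: o_def omul.scaleR_left)
  qed
  have "(\<Sum>l\<in>UNIV. omul (E1 (k + eb l) - E1 (k - eb l)) (omul (eb l) g))
      = (1 / (2 * pi) ^ 8) *\<^sub>R integral C (\<lambda>u. \<Sum>l\<in>UNIV. omul (H l u) (omul (eb l) g))"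
    unfolding integral_H
    using integrable_linear[OF integrable_H omul.bounded_linear_left]
    by (simp add: integral_sum scaleR_sum_right o_def)
  also have "integral C (\<lambda>u. \<Sum>l\<in>UNIV. omul (H l u) (omul (eb l) g)) = integral C (\<lambda>u. cos (u \<bullet> k) *\<^sub>R (2 *\<^sub>R g))"
  proof (rule integral_spike[of "{x. x $ 0 = -pi} \<union> {x. x $ 0 = 0} \<union> {x. x $ 0 = pi}"])
    show "negligible ({x :: real^8. x $ 0 = -pi} \<union> {x. x $ 0 = 0} \<union> {x. x $ 0 = pi})"
      by (intro negligible_Un negligible_coordinate_hyperplane)
    fix u assume "u \<in> C - ({x. x $ 0 = -pi} \<union> {x. x $ 0 = 0} \<union> {x. x $ 0 = pi})"
    then have "sin_vec u \<noteq> 0" unfolding C_def by (intro sin_vec_nonzero[where i = 0]) auto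
    then show "cos (u \<bullet> k) *\<^sub>R (2 *\<^sub>R g) = (\<Sum>l\<in>UNIV. omul (H l u) (omul (eb l) g))"
      unfolding H_def E1_integrand_central_difference by simp
  qed
  also have "\<dots> = integral C (\<lambda>u. cos (u \<bullet> k)) *\<^sub>R (2 *\<^sub>R g)"
  proof -
    have "(\<lambda>u. cos (u \<bullet> k)) integrable_on C"
      unfolding C_def by (rule integrable_continuous) (auto intro!: continuous_intros)
    then show ?thesis
      by (intro integral_unique has_integral_scaleR_left integrable_integral)
  qed
  also have "integral C (\<lambda>u. cos (u \<bullet> k)) = (if k = 0 then (2 * pi) ^ 8 else 0)"
    unfolding C_def using integral_cos_inner_Ints[OF k] by simp
  finally show ?thesis by simp
qed

lemma Eh_fundamental_solution:
  assumes h: "h \<noteq> 0" and z: "z \<in> lattice h"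
  shows "(\<Sum>l\<in>UNIV. omul (Eh h (z + h *\<^sub>R eb l) - Eh h (z - h *\<^sub>R eb l)) (omul (eb l) g))
         = (if z = 0 then 2 / h ^ 7 else 0) *\<^sub>R g"
proof -
  define k where "k = (1 / h) *\<^sub>R z"
  have "(1 / h) *\<^sub>R (z + h *\<^sub>R eb l) = k + eb l" "(1 / h) *\<^sub>R (z - h *\<^sub>R eb l) = k - eb l" for l
    using h by (simp_all add: k_def scaleR_add_right scaleR_diff_right)
  then have "(\<Sum>l\<in>UNIV. omul (Eh h (z + h *\<^sub>R eb l) - Eh h (z - h *\<^sub>R eb l)) (omul (eb l) g))
      = (1 / h ^ 7) *\<^sub>R (\<Sum>l\<in>UNIV. omul (E1 (k + eb l) - E1 (k - eb l)) (omul (eb l) g))"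
    unfolding Eh_def by (simp add: scaleR_diff_right[symmetric] omul.scaleR_left scaleR_sum_right)
  also have "\<dots> = (1 / h ^ 7) *\<^sub>R ((if k = 0 then 2 else 0) *\<^sub>R g)"
    unfolding k_def using E1_fundamental_solution[OF lattice_scaled_Ints[OF h z]] by simp
  also have "k = 0 \<longleftrightarrow> z = 0" using h by (simp add: k_def)
  finally show ?thesis by simp
qed

section \<open>Summation by parts\<close>

lemma indicator_differences_off_bdry:
  assumes "x \<in> lattice h" and "x \<notin> bdry h B"
  shows "dminus h l (indicator B) x = (0::real)" and "dplus h l (indicator B) x = (0::real)"
proof -
  have "x \<in> nbhd h x" "x + h *\<^sub>R eb l \<in> nbhd h x" "x - h *\<^sub>R eb l \<in> nbhd h x"
    unfolding nbhd_def by auto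
  moreover have "nbhd h x \<inter> B = {} \<or> nbhd h x \<subseteq> B"
    using assms nbhd_subset_lattice[of x h] unfolding bdry_def by blast
  ultimately show "dminus h l (indicator B) x = 0" "dplus h l (indicator B) x = 0"
    unfolding dminus_def dplus_def by (auto simp: indicator_def)
qed

text \<open>Where Sig vanishes the normals are 0 / 0 = 0, but so are the difference quotients.\<close>
lemma sdens_mult_normal:
  "sdens h B x * nminus h B l x = - (h ^ 8 * dminus h l (indicator B) x)"
  "sdens h B x * nplus h B l x = - (h ^ 8 * dplus h l (indicator B) x)"
proof -
  have "dminus h l (indicator B) x = (0::real) \<and> dplus h l (indicator B) x = (0::real)"
    if "Sig h B x = 0"
    using that unfolding Sig_def by (subst (asm) sum_nonneg_eq_0_iff) (auto simp: add_nonneg_eq_0_iff)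
  then show "sdens h B x * nminus h B l x = - (h ^ 8 * dminus h l (indicator B) x)"
      "sdens h B x * nplus h B l x = - (h ^ 8 * dplus h l (indicator B) x)"
    unfolding sdens_def nminus_def nplus_def by (cases "Sig h B x = 0"; simp)+
qed

lemma sdens_Kstar:
  "sdens h B x *\<^sub>R Kstar h B x y g = (h ^ 8 / 2) *\<^sub>R
     (\<Sum>l\<in>UNIV. omul (dminus h l (indicator B) x *\<^sub>R Eh h (y - x + h *\<^sub>R eb l)
                     + dplus h l (indicator B) x *\<^sub>R Eh h (y - x - h *\<^sub>R eb l)) (omul (eb l) (g x)))"
proof -
  have "sdens h B x / 2 * nminus h B l x = - (h ^ 8 / 2 * dminus h l (indicator B) x)"
    "sdens h B x / 2 * nplus h B l x = - (h ^ 8 / 2 * dplus h l (indicator B) x)" for l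
    using sdens_mult_normal[of h B x l] by simp_all
  then have "- ((sdens h B x / 2) *\<^sub>R (nminus h B l x *\<^sub>R E + nplus h B l x *\<^sub>R E'))
      = (h ^ 8 / 2) *\<^sub>R (dminus h l (indicator B) x *\<^sub>R E + dplus h l (indicator B) x *\<^sub>R E')"
    for l and E E' :: oct
    unfolding scaleR_add_right scaleR_scaleR by simp
  moreover have shifted_args: "h *\<^sub>R eb l - x + y = y - x + h *\<^sub>R eb l" "- (h *\<^sub>R eb l) - x + y = y - x - h *\<^sub>R eb l"
    for l by (simp_all add: algebra_simps)
  ultimately show ?thesis
    unfolding Kstar_def shifted_args
    by (simp add: scaleR_sum_right omul.scaleR_left[symmetric] del: omul.scaleR_left)
qed

lemma sum_shift_indicator:
  fixes \<phi> :: "'a::ab_group_add \<Rightarrow> 'b::real_vector"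
  assumes "finite T" and "(\<lambda>x. x + v) ` B \<subseteq> T"
  shows "(\<Sum>x\<in>B. \<phi> (x + v)) = (\<Sum>w\<in>T. indicator B (w - v) *\<^sub>R \<phi> w)"
proof -
  have "(\<Sum>x\<in>B. \<phi> (x + v)) = (\<Sum>w\<in>(\<lambda>x. x + v) ` B. \<phi> w)"
    by (subst sum.reindex) (auto simp: inj_on_def)
  also have "\<dots> = (\<Sum>w\<in>T. if w \<in> (\<lambda>x. x + v) ` B then \<phi> w else 0)"
    using assms by (simp add: sum.inter_restrict[symmetric] Int_absorb1)
  also have "\<dots> = (\<Sum>w\<in>T. indicator B (w - v) *\<^sub>R \<phi> w)"
    by (intro sum.cong) (auto simp: indicator_def image_iff intro: bexI[of _ "_ - v"])
  finally show ?thesis .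
qed

lemma surf_int_Kstar:
  assumes T: "finite T" "bdry h B \<subseteq> T" "T \<subseteq> lattice h"
  shows "surf_int h B (\<lambda>x. Kstar h B x y g) = (h ^ 8 / 2) *\<^sub>R
     (\<Sum>w\<in>T. \<Sum>l\<in>UNIV. omul (dminus h l (indicator B) w *\<^sub>R Eh h (y - w + h *\<^sub>R eb l)
                     + dplus h l (indicator B) w *\<^sub>R Eh h (y - w - h *\<^sub>R eb l)) (omul (eb l) (g w)))"
    (is "_ = _ *\<^sub>R sum ?F T")
proof -
  have "surf_int h B (\<lambda>x. Kstar h B x y g) = (h ^ 8 / 2) *\<^sub>R sum ?F (bdry h B)"
    unfolding surf_int_def sdens_Kstar by (simp add: scaleR_sum_right)
  also have "sum ?F (bdry h B) = sum ?F T"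
  proof (rule sum.mono_neutral_left[OF T(1,2)], rule ballI)
    fix w assume "w \<in> T - bdry h B"
    then have "w \<in> lattice h" "w \<notin> bdry h B" using T(3) by auto
    then show "?F w = 0"
      by (simp add: indicator_differences_off_bdry omul.zero_left)
  qed
  finally show ?thesis .
qed

lemma dcent_eq_central_quotient:
  "h \<noteq> 0 \<Longrightarrow> dcent h l f x = (1 / (2 * h)) *\<^sub>R (f (x + h *\<^sub>R eb l) - f (x - h *\<^sub>R eb l))"
  unfolding dcent_def dplus_def dminus_def by (simp add: scaleR_add_right[symmetric] scaleR_diff_right)

lemma vol_int_Eh_Dh:
  assumes "h \<noteq> 0" and T: "finite T"
    and shifts: "\<And>l. (\<lambda>x. x + h *\<^sub>R eb l) ` B \<subseteq> T" "\<And>l. (\<lambda>x. x - h *\<^sub>R eb l) ` B \<subseteq> T"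
  shows "vol_int h B (\<lambda>x. omul (Eh h (y - x)) (Dh h g x)) = (h ^ 8 / (2 * h)) *\<^sub>R
     (\<Sum>w\<in>T. \<Sum>l\<in>UNIV. indicator B (w - h *\<^sub>R eb l) *\<^sub>R omul (Eh h (y - w + h *\<^sub>R eb l)) (omul (eb l) (g w))
                     - indicator B (w + h *\<^sub>R eb l) *\<^sub>R omul (Eh h (y - w - h *\<^sub>R eb l)) (omul (eb l) (g w)))"
proof -
  define P where "P l w = omul (Eh h (y - w + h *\<^sub>R eb l)) (omul (eb l) (g w))" for l w
  define Q where "Q l w = omul (Eh h (y - w - h *\<^sub>R eb l)) (omul (eb l) (g w))" for l w
  have "omul (Eh h (y - x)) (Dh h g x)
      = (1 / (2 * h)) *\<^sub>R (\<Sum>l\<in>UNIV. P l (x + h *\<^sub>R eb l) - Q l (x + - (h *\<^sub>R eb l)))" for x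
  proof -
    have "y - (x + v) + v = y - x" "y - (x + - v) - v = y - x" for v :: "real^8"
      by (simp_all add: algebra_simps)
    then show ?thesis
      unfolding Dh_def dcent_eq_central_quotient[OF \<open>h \<noteq> 0\<close>] P_def Q_def
      by (simp add: omul.sum_right omul.scaleR_right omul.diff_right scaleR_sum_right)
  qed
  then have "vol_int h B (\<lambda>x. omul (Eh h (y - x)) (Dh h g x)) = (h ^ 8 / (2 * h)) *\<^sub>R
      (\<Sum>l\<in>UNIV. (\<Sum>x\<in>B. P l (x + h *\<^sub>R eb l)) - (\<Sum>x\<in>B. Q l (x + - (h *\<^sub>R eb l))))"
    unfolding vol_int_def
    by (simp add: scaleR_scaleR scaleR_sum_right[symmetric] sum_subtractf sum.swap[of _ B])
  also have "\<dots> = (h ^ 8 / (2 * h)) *\<^sub>R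
      (\<Sum>l\<in>UNIV. (\<Sum>w\<in>T. indicator B (w - h *\<^sub>R eb l) *\<^sub>R P l w)
                  - (\<Sum>w\<in>T. indicator B (w + h *\<^sub>R eb l) *\<^sub>R Q l w))"
  proof -
    have "(\<Sum>x\<in>B. P l (x + h *\<^sub>R eb l)) = (\<Sum>w\<in>T. indicator B (w - h *\<^sub>R eb l) *\<^sub>R P l w)" for l
      using sum_shift_indicator[OF T shifts(1)] .
    moreover have "(\<Sum>x\<in>B. Q l (x + - (h *\<^sub>R eb l))) = (\<Sum>w\<in>T. indicator B (w + h *\<^sub>R eb l) *\<^sub>R Q l w)" for l
      using sum_shift_indicator[OF T, of "- (h *\<^sub>R eb l)" B "Q l"] shifts(2)[of l] by simp
    ultimately show ?thesis by simp
  qed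
  finally show ?thesis
    unfolding P_def Q_def by (simp add: sum_subtractf sum.swap[of _ T])
qed

lemma summation_by_parts_coefficients:
  fixes P Q :: "'a::real_vector"
  assumes "h \<noteq> 0"
  shows "(s / 2) *\<^sub>R (((1 / h) * (a - b)) *\<^sub>R P + ((1 / h) * (c - a)) *\<^sub>R Q)
           + (s / (2 * h)) *\<^sub>R (b *\<^sub>R P - c *\<^sub>R Q)
         = (s / (2 * h)) *\<^sub>R (a *\<^sub>R (P - Q))"
proof -
  have "(s / 2) *\<^sub>R (((1 / h) * (a - b)) *\<^sub>R P + ((1 / h) * (c - a)) *\<^sub>R Q)
           + (s / (2 * h)) *\<^sub>R (b *\<^sub>R P - c *\<^sub>R Q)
      = ((s / 2) * ((1 / h) * (a - b)) + (s / (2 * h)) * b) *\<^sub>R P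
        + ((s / 2) * ((1 / h) * (c - a)) - (s / (2 * h)) * c) *\<^sub>R Q"
    by (simp add: scaleR_add_right scaleR_diff_right scaleR_add_left scaleR_diff_left)
  also have "(s / 2) * ((1 / h) * (a - b)) + (s / (2 * h)) * b = (s / (2 * h)) * a"
    using assms by (simp add: field_simps)
  also have "(s / 2) * ((1 / h) * (c - a)) - (s / (2 * h)) * c = - ((s / (2 * h)) * a)"
    using assms by (simp add: field_simps)
  finally show ?thesis by (simp add: scaleR_diff_right)
qed

text \<open>The difference quotients of the indicator in the boundary sum combine with the shifted
  indicators of the volume sum into the indicator itself.\<close>
lemma discrete_Green_formula:
  assumes "h \<noteq> 0" and T: "finite T" "bdry h B \<subseteq> T" "T \<subseteq> lattice h"
    and shifts: "\<And>l. (\<lambda>x. x + h *\<^sub>R eb l) ` B \<subseteq> T" "\<And>l. (\<lambda>x. x - h *\<^sub>R eb l) ` B \<subseteq> T"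
  shows "surf_int h B (\<lambda>x. Kstar h B x y g) + vol_int h B (\<lambda>x. omul (Eh h (y - x)) (Dh h g x))
    = (h ^ 8 / (2 * h)) *\<^sub>R (\<Sum>w\<in>T. indicator B w *\<^sub>R
         (\<Sum>l\<in>UNIV. omul (Eh h (y - w + h *\<^sub>R eb l) - Eh h (y - w - h *\<^sub>R eb l)) (omul (eb l) (g w))))"
proof -
  let ?X = "indicator B :: real^8 \<Rightarrow> real"
  define P where "P l w = omul (Eh h (y - w + h *\<^sub>R eb l)) (omul (eb l) (g w))" for l w
  define Q where "Q l w = omul (Eh h (y - w - h *\<^sub>R eb l)) (omul (eb l) (g w))" for l w
  have surf_vol: "surf_int h B (\<lambda>x. Kstar h B x y g) + vol_int h B (\<lambda>x. omul (Eh h (y - x)) (Dh h g x))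
      = (\<Sum>w\<in>T. \<Sum>l\<in>UNIV. (h ^ 8 / 2) *\<^sub>R (dminus h l ?X w *\<^sub>R P l w + dplus h l ?X w *\<^sub>R Q l w)
          + (h ^ 8 / (2 * h)) *\<^sub>R (?X (w - h *\<^sub>R eb l) *\<^sub>R P l w - ?X (w + h *\<^sub>R eb l) *\<^sub>R Q l w))"
    unfolding surf_int_Kstar[OF T] vol_int_Eh_Dh[OF \<open>h \<noteq> 0\<close> T(1) shifts] P_def Q_def
    by (simp add: omul.add_left omul.scaleR_left scaleR_add_right scaleR_sum_right sum.distrib)
  have combine: "(h ^ 8 / 2) *\<^sub>R (dminus h l ?X w *\<^sub>R P l w + dplus h l ?X w *\<^sub>R Q l w)
      + (h ^ 8 / (2 * h)) *\<^sub>R (?X (w - h *\<^sub>R eb l) *\<^sub>R P l w - ?X (w + h *\<^sub>R eb l) *\<^sub>R Q l w)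
      = (h ^ 8 / (2 * h)) *\<^sub>R (?X w *\<^sub>R (P l w - Q l w))" for l w
  proof -
    have "dminus h l ?X w = (1 / h) * (?X w - ?X (w - h *\<^sub>R eb l))"
      "dplus h l ?X w = (1 / h) * (?X (w + h *\<^sub>R eb l) - ?X w)"
      unfolding dminus_def dplus_def by simp_all
    then show ?thesis
      using summation_by_parts_coefficients[OF \<open>h \<noteq> 0\<close>, of "h ^ 8"] by simp
  qed
  show ?thesis
    unfolding surf_vol combine unfolding P_def Q_def scaleR_sum_right omul.diff_left ..
qed

lemma nbhd_cover:
  assumes "finite B" and "B \<subseteq> lattice h"
  defines "T \<equiv> \<Union>x\<in>B. nbhd h x"
  shows "finite T" and "B \<subseteq> T" and "bdry h B \<subseteq> T" and "T \<subseteq> lattice h"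
    and "\<And>l. (\<lambda>x. x + h *\<^sub>R eb l) ` B \<subseteq> T" and "\<And>l. (\<lambda>x. x - h *\<^sub>R eb l) ` B \<subseteq> T"
proof -
  show "finite T" unfolding T_def using assms(1) by (simp add: finite_nbhd)
  show "B \<subseteq> T" unfolding T_def nbhd_def by blast
  show "(\<lambda>x. x + h *\<^sub>R eb l) ` B \<subseteq> T" "(\<lambda>x. x - h *\<^sub>R eb l) ` B \<subseteq> T" for l
    unfolding T_def nbhd_def by blast+
  show "bdry h B \<subseteq> T" unfolding T_def bdry_def using nbhd_sym[of _ h] by blast
  show "T \<subseteq> lattice h" unfolding T_def using assms(2) nbhd_subset_lattice by blast
qed

theorem mainTheorem7:
  fixes h :: real and B :: "(real ^ 8) set" and f :: "real ^ 8 \<Rightarrow> oct" and y :: "real ^ 8"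
  assumes "h > 0" and "B \<subseteq> lattice h" and "bounded B" and "y \<in> lattice h"
  shows "indicator B y *\<^sub>R f y =
           surf_int h B (\<lambda>x. Kstar h B x y f) + vol_int h B (\<lambda>x. omul (Eh h (y - x)) (Dh h f x))"
proof -
  define T where "T = (\<Union>x\<in>B. nbhd h x)"
  have "h \<noteq> 0" using assms(1) by simp
  note T = nbhd_cover[OF finite_bounded_lattice_subset[OF assms(1-3)] assms(2), folded T_def]
  have delta: "(\<Sum>l\<in>UNIV. omul (Eh h (y - w + h *\<^sub>R eb l) - Eh h (y - w - h *\<^sub>R eb l)) (omul (eb l) (f w)))
      = (if w = y then 2 / h ^ 7 else 0) *\<^sub>R f w" if "w \<in> T" for w
    using Eh_fundamental_solution[OF \<open>h \<noteq> 0\<close> lattice_diff[OF assms(4)], of w] that T(4) by auto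
  have "surf_int h B (\<lambda>x. Kstar h B x y f) + vol_int h B (\<lambda>x. omul (Eh h (y - x)) (Dh h f x))
      = (h ^ 8 / (2 * h)) *\<^sub>R (\<Sum>w\<in>T. if w = y then (indicator B y * (2 / h ^ 7)) *\<^sub>R f y else 0)"
    unfolding discrete_Green_formula[OF \<open>h \<noteq> 0\<close> T(1,3,4,5,6)]
    using delta by (intro arg_cong[where f="scaleR _"] sum.cong) auto
  also have "\<dots> = indicator B y *\<^sub>R f y"
  proof -
    have "h ^ 8 / (2 * h) * (2 / h ^ 7) = 1"
      using \<open>h \<noteq> 0\<close> by (simp add: field_simps eval_nat_numeral)
    then show ?thesis
      using T(1,2) by (cases "y \<in> B") (auto simp: sum.delta indicator_def)
  qed
  finally show ?thesis ..
qed

end
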